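(* Let $\mathcal{O}$ be a proper $A$-order in a totally definite quaternion algebra $D$ over a totally real field $F$, and let $\widetilde A:=\mathrm{Nr}_A(\mathcal{O})$. Then $\widetilde A=A$ if and only if $\mathcal{O}$ is closed under the canonical involution $x\mapsto \mathrm{Tr}(x)-x$.
   Context: $A\subseteq O_F$ is a $\mathbb{Z}$-order; $\mathcal{O}$ is a proper $A$-order if $\mathcal{O}\cap F=A$. $\mathrm{Nr}$ and $\mathrm{Tr}$ are the reduced norm and trace of $D/F$. $\mathrm{Nr}_A(\mathcal{O})$ is the $A$-submodule of $F$ generated by $\{\mathrm{Nr}(x):x\in\mathcal{O}\}$; it is an order with $A\subseteq\widetilde A\subseteq O_F$. *)

theory Defs
  imports "HOL-Analysis.Analysis" "HOL-Computational_Algebra.Polynomial"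
begin

definition zspan :: "'v::real_vector set \<Rightarrow> 'v set" where
  "zspan S = {(\<Sum>g\<in>G. of_int (c g) *\<^sub>R g) | G c. finite G \<and> G \<subseteq> S}"

definition qspan :: "'v::real_vector set \<Rightarrow> 'v set" where
  "qspan S = {(\<Sum>g\<in>G. c g *\<^sub>R g) | G c. finite G \<and> G \<subseteq> S \<and> (\<forall>g\<in>G. c g \<in> \<rat>)}"

definition fg_Z_module :: "'v::real_vector set \<Rightarrow> bool" where
  "fg_Z_module S \<longleftrightarrow> (\<exists>G. finite G \<and> G \<subseteq> S \<and> S = zspan G)"

definition subfield :: "complex set \<Rightarrow> bool" where
  "subfield F \<longleftrightarrow> 0 \<in> F \<and> 1 \<in> F \<and>
     (\<forall>x\<in>F. \<forall>y\<in>F. x + y \<in> F \<and> x * y \<in> F) \<and>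
     (\<forall>x\<in>F. - x \<in> F \<and> inverse x \<in> F)"

definition number_field :: "complex set \<Rightarrow> bool" where
  "number_field F \<longleftrightarrow> subfield F \<and> (\<exists>B. finite B \<and> B \<subseteq> F \<and> F = qspan B)"

definition field_embedding :: "complex set \<Rightarrow> (complex \<Rightarrow> complex) \<Rightarrow> bool" where
  "field_embedding F \<sigma> \<longleftrightarrow> \<sigma> 1 = 1 \<and>
     (\<forall>x\<in>F. \<forall>y\<in>F. \<sigma> (x + y) = \<sigma> x + \<sigma> y \<and> \<sigma> (x * y) = \<sigma> x * \<sigma> y)"

definition totally_real_field :: "complex set \<Rightarrow> bool" where
  "totally_real_field F \<longleftrightarrow> number_field F \<and>
     (\<forall>\<sigma>. field_embedding F \<sigma> \<longrightarrow> \<sigma> ` F \<subseteq> \<real>)"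

definition ring_of_integers :: "complex set \<Rightarrow> complex set" where
  "ring_of_integers F = {x \<in> F. algebraic_int x}"

definition Z_order :: "complex set \<Rightarrow> complex set \<Rightarrow> bool" where
  "Z_order F A \<longleftrightarrow> A \<subseteq> ring_of_integers F \<and> 1 \<in> A \<and>
     (\<forall>x\<in>A. \<forall>y\<in>A. x + y \<in> A \<and> x * y \<in> A \<and> x - y \<in> A) \<and>
     fg_Z_module A \<and> F \<subseteq> qspan A"

text \<open>An element \<open>x0 + x1 i + x2 j + x3 k\<close> with \<open>i^2 = a, j^2 = b, k = ij = -ji\<close>
  is represented by the 4-tuple \<open>(x0,x1,x2,x3)\<close>.\<close>
type_synonym quat = "complex \<times> complex \<times> complex \<times> complex"

definition qalg :: "complex set \<Rightarrow> quat set" where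
  "qalg F = F \<times> F \<times> F \<times> F"

definition qemb :: "complex \<Rightarrow> quat" where
  "qemb c = (c, 0, 0, 0)"

fun qmul :: "complex \<Rightarrow> complex \<Rightarrow> quat \<Rightarrow> quat \<Rightarrow> quat" where
  "qmul a b (x0, x1, x2, x3) (y0, y1, y2, y3) =
     (x0*y0 + a*x1*y1 + b*x2*y2 - a*b*x3*y3,
      x0*y1 + x1*y0 - b*x2*y3 + b*x3*y2,
      x0*y2 + x2*y0 + a*x1*y3 - a*x3*y1,
      x0*y3 + x3*y0 + x1*y2 - x2*y1)"

fun qnr :: "complex \<Rightarrow> complex \<Rightarrow> quat \<Rightarrow> complex" where
  "qnr a b (x0, x1, x2, x3) = x0^2 - a*x1^2 - b*x2^2 + a*b*x3^2"

fun qtr :: "quat \<Rightarrow> complex" where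
  "qtr (x0, x1, x2, x3) = 2 * x0"

definition qconj :: "quat \<Rightarrow> quat" where
  "qconj x = qemb (qtr x) - x"

text \<open>\<open>(a,b)_F\<close> is a totally definite quaternion algebra over the totally real field F:
  a, b nonzero elements of F, and at every real place \<sigma> both \<sigma>(a), \<sigma>(b) are negative
  (i.e. \<open>D \<otimes>_\<sigma> \<real>\<close> is Hamilton's quaternions).\<close>
definition totally_definite_qalg :: "complex set \<Rightarrow> complex \<Rightarrow> complex \<Rightarrow> bool" where
  "totally_definite_qalg F a b \<longleftrightarrow> totally_real_field F \<and> a \<in> F \<and> b \<in> F \<and> a \<noteq> 0 \<and> b \<noteq> 0 \<and>
     (\<forall>\<sigma>. field_embedding F \<sigma> \<longrightarrow>
        \<sigma> a \<in> \<real> \<and> Re (\<sigma> a) < 0 \<and> \<sigma> b \<in> \<real> \<and> Re (\<sigma> b) < 0)"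

definition quat_order :: "complex set \<Rightarrow> complex \<Rightarrow> complex \<Rightarrow> quat set \<Rightarrow> bool" where
  "quat_order F a b \<O> \<longleftrightarrow> \<O> \<subseteq> qalg F \<and> qemb 1 \<in> \<O> \<and>
     (\<forall>x\<in>\<O>. \<forall>y\<in>\<O>. x + y \<in> \<O> \<and> x - y \<in> \<O> \<and> qmul a b x y \<in> \<O>) \<and>
     fg_Z_module \<O> \<and> qalg F \<subseteq> qspan \<O>"

definition proper_A_order ::
  "complex set \<Rightarrow> complex \<Rightarrow> complex \<Rightarrow> complex set \<Rightarrow> quat set \<Rightarrow> bool" where
  "proper_A_order F a b A \<O> \<longleftrightarrow> quat_order F a b \<O> \<and> qemb ` A \<subseteq> \<O> \<and>
     {c \<in> F. qemb c \<in> \<O>} = A"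

definition NrA :: "complex \<Rightarrow> complex \<Rightarrow> complex set \<Rightarrow> quat set \<Rightarrow> complex set" where
  "NrA a b A \<O> = {(\<Sum>i<(n::nat). c i * qnr a b (y i)) | n c y. \<forall>i<n. c i \<in> A \<and> y i \<in> \<O>}"

end

theory Submission
  imports Defs
begin

(* Write x' = Tr(x) - x for the canonical involution.  Two identities in
   the quaternion algebra (a,b)_F drive the argument:
     (i)  x * x' = Nr(x)                      (the norm is the product with the conjugate),
     (ii) Nr(x + 1) = Nr(x) + Tr(x) + 1        (polarisation at 1).
   Since 1 lies in the order, A = A * Nr(1) is always contained in Nr_A(O).
   If Nr_A(O) = A, then (ii) shows Tr(x) is in A for every x in O, hence
   x' = Tr(x) - x lies in O.  Conversely, if O is closed under the involution, (i) shows
   that Nr(x) lies in O and in F, hence in O \<inter> F = A by properness; as A is a ring,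
   every A-linear combination of norms lies in A, so Nr_A(O) = A. *)

lemma qconj_eq: "qconj (x0, x1, x2, x3) = (x0, -x1, -x2, -x3)"
  by (simp add: qconj_def qemb_def)

lemma qmul_qconj: "qmul a b x (qconj x) = qemb (qnr a b x)"
  by (cases x) (auto simp: qconj_eq qemb_def power2_eq_square algebra_simps)

text \<open>Polarisation at 1: the trace is recovered from norms.\<close>
lemma qnr_add_one: "qnr a b (x + qemb 1) = qnr a b x + qtr x + 1"
  by (cases x) (auto simp: qemb_def power2_eq_square algebra_simps)

lemma qnr_one [simp]: "qnr a b (qemb 1) = 1"
  by (simp add: qemb_def)

lemma qnr_in_field:
  assumes F: "subfield F" and ab: "a \<in> F" "b \<in> F" and x: "x \<in> qalg F"
  shows "qnr a b x \<in> F"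
proof -
  obtain x0 x1 x2 x3 where x_eq: "x = (x0, x1, x2, x3)" by (cases x) auto
  have coords: "x0 \<in> F" "x1 \<in> F" "x2 \<in> F" "x3 \<in> F"
    using x x_eq by (auto simp: qalg_def)
  have add: "u + v \<in> F" and mult: "u * v \<in> F" and neg: "- u \<in> F"
    if "u \<in> F" "v \<in> F" for u v
    using F that unfolding subfield_def by blast+
  have diff: "u - v \<in> F" if "u \<in> F" "v \<in> F" for u v
    using add[OF that(1) neg[OF that(2) that(1)]] by simp
  show ?thesis unfolding x_eq qnr.simps power2_eq_square
    by (intro diff add mult coords ab)
qed

lemma NrA_single:
  assumes "c \<in> A" "y \<in> \<O>"
  shows "c * qnr a b y \<in> NrA a b A \<O>"
  unfolding NrA_def
proof (intro CollectI exI conjI)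
  show "c * qnr a b y = (\<Sum>i<(1::nat). (\<lambda>_. c) i * qnr a b ((\<lambda>_. y) i))" by simp
  show "\<forall>i<1. (\<lambda>_. c) i \<in> A \<and> (\<lambda>_. y) i \<in> \<O>" using assms by simp
qed

lemma subset_NrA:
  assumes "qemb 1 \<in> \<O>"
  shows "A \<subseteq> NrA a b A \<O>"
  using NrA_single[OF _ assms, of _ A a b] by auto

lemma NrA_subset:
  assumes zero: "0 \<in> A"
    and closed: "\<And>u v. u \<in> A \<Longrightarrow> v \<in> A \<Longrightarrow> u + v \<in> A \<and> u * v \<in> A"
    and norms: "\<And>y. y \<in> \<O> \<Longrightarrow> qnr a b y \<in> A"
  shows "NrA a b A \<O> \<subseteq> A"
proof
  fix z assume "z \<in> NrA a b A \<O>"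
  then obtain n c y where z: "z = (\<Sum>i<(n::nat). c i * qnr a b (y i))"
    and cy: "\<forall>i<n. c i \<in> A \<and> y i \<in> \<O>"
    unfolding NrA_def by blast
  have "(\<Sum>i<m. c i * qnr a b (y i)) \<in> A" if "m \<le> n" for m
    using that
  proof (induction m)
    case 0
    then show ?case using zero by simp
  next
    case (Suc m)
    then have "(\<Sum>i<m. c i * qnr a b (y i)) \<in> A" "c m * qnr a b (y m) \<in> A"
      using cy norms closed by auto
    then show ?case using closed by simp
  qed
  then show "z \<in> A" using z by blast
qed

text \<open>If \<open>Nr_A(O) = A\<close>, then every trace of O lies in A, so O is closed under conjugation.\<close>
lemma qconj_closed_if_NrA_eq:
  assumes "quat_order F a b \<O>" and "Z_order F A" and A_in_O: "qemb ` A \<subseteq> \<O>"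
    and N: "NrA a b A \<O> = A"
    and x: "x \<in> \<O>"
  shows "qconj x \<in> \<O>"
proof -
  have one: "qemb 1 \<in> \<O>" and O_closed: "\<forall>u\<in>\<O>. \<forall>v\<in>\<O>. u + v \<in> \<O> \<and> u - v \<in> \<O>"
    using assms(1) unfolding quat_order_def by auto
  have A_one: "1 \<in> A" and A_diff: "\<forall>u\<in>A. \<forall>v\<in>A. u - v \<in> A"
    using assms(2) unfolding Z_order_def by auto
  have "x + qemb 1 \<in> \<O>" using O_closed x one by simp
  from NrA_single[OF A_one this, of a b] have "qnr a b (x + qemb 1) \<in> A"
    using N by simp
  moreover have "qnr a b x \<in> A"
    using NrA_single[OF A_one x, of a b] N by simp
  moreover have "qtr x = qnr a b (x + qemb 1) - qnr a b x - 1"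
    by (simp add: qnr_add_one)
  ultimately have "qtr x \<in> A" using A_one A_diff by metis
  then have "qemb (qtr x) \<in> \<O>" using A_in_O by blast
  then show ?thesis unfolding qconj_def using O_closed x by simp
qed

text \<open>If O is closed under conjugation, then \<open>Nr(x) = x x'\<close> lies in \<open>O \<inter> F = A\<close>.\<close>
lemma qnr_in_A_if_qconj_closed:
  assumes F: "subfield F" and ab: "a \<in> F" "b \<in> F"
    and proper: "proper_A_order F a b A \<O>"
    and conj_closed: "\<forall>x\<in>\<O>. qconj x \<in> \<O>"
    and y: "y \<in> \<O>"
  shows "qnr a b y \<in> A"
proof -
  have O_sub: "\<O> \<subseteq> qalg F" and O_mult: "\<forall>u\<in>\<O>. \<forall>v\<in>\<O>. qmul a b u v \<in> \<O>"
    and O_cap_F: "{c \<in> F. qemb c \<in> \<O>} = A"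
    using proper unfolding proper_A_order_def quat_order_def by auto
  have "qemb (qnr a b y) \<in> \<O>"
    using qmul_qconj[of a b y] O_mult conj_closed y by metis
  moreover have "qnr a b y \<in> F" using qnr_in_field[OF F ab] O_sub y by blast
  ultimately show ?thesis using O_cap_F by blast
qed

theorem mainTheorem6:
  fixes F A :: "complex set" and a b :: complex and \<O> :: "quat set"
  assumes "totally_real_field F"
    and "Z_order F A"
    and "totally_definite_qalg F a b"
    and "proper_A_order F a b A \<O>"
  shows "NrA a b A \<O> = A \<longleftrightarrow> (\<forall>x\<in>\<O>. qconj x \<in> \<O>)"
proof -
  have order: "quat_order F a b \<O>" and A_in_O: "qemb ` A \<subseteq> \<O>"
    using assms(4) unfolding proper_A_order_def by auto
  have F: "subfield F"
    using assms(1) unfolding totally_real_field_def number_field_def by auto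
  have ab: "a \<in> F" "b \<in> F"
    using assms(3) unfolding totally_definite_qalg_def by auto
  have A_one: "1 \<in> A" and A_ring: "\<forall>u\<in>A. \<forall>v\<in>A. u + v \<in> A \<and> u * v \<in> A \<and> u - v \<in> A"
    using assms(2) unfolding Z_order_def by auto
  have A_zero: "0 \<in> A" using A_one A_ring by (metis diff_self)
  have A_sub_NrA: "A \<subseteq> NrA a b A \<O>"
    using subset_NrA order unfolding quat_order_def by simp
  have NrA_sub_A: "NrA a b A \<O> \<subseteq> A" if conj_closed: "\<forall>x\<in>\<O>. qconj x \<in> \<O>"
    using A_zero
  proof (rule NrA_subset)
    show "u + v \<in> A \<and> u * v \<in> A" if "u \<in> A" "v \<in> A" for u v
      using A_ring that by blast
    show "qnr a b y \<in> A" if "y \<in> \<O>" for y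
      using qnr_in_A_if_qconj_closed[OF F ab assms(4) conj_closed that] .
  qed
  show ?thesis
    using qconj_closed_if_NrA_eq[OF order assms(2) A_in_O] A_sub_NrA NrA_sub_A by blast
qed

end
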